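(* Let $\mathfrak{M}=\{M^{(\alpha)}:\alpha>0\}$ be a non-quasianalytic weight matrix. Then $\mathfrak{K}=\mathfrak{K}(\mathfrak{M})$ is a weight matrix such that $(K^{(\alpha)}_j/j!)^{1/j}\to\infty$ as $j\to\infty$ and $K^{(\alpha)}_j/M^{(\alpha)}_j$ is bounded in $j$, for all $\alpha>0$.
   Context: A weight sequence is $M=(M_k)_{k\ge0}$ with $M_k=\mu_0\cdots\mu_k$, $1=\mu_0\le\mu_1\le\cdots$, $\mu_k\to\infty$; non-quasianalytic if $\sum_k1/\mu_k<\infty$. A weight matrix is a family $\{M^{(\alpha)}:\alpha>0\}$ of weight sequences with $M^{(\alpha)}\le M^{(\beta)}$ (termwise) for $\alpha\le\beta$; non-quasianalytic if every member is. Associated function: $\omega_M(t)=\sup_k\log(t^kM_0/M_k)$, $\omega_M(0)=0$; $\widetilde\omega_M(t)=\omega_M(t)+\log(1+t^2)$. For a non-quasianalytic pre-weight function $\omega$ (continuous increasing, $\omega(0)=0$, $\log t=o(\omega(t))$, $t\mapsto\omega(e^t)$ convex, $\int_0^\infty\omega(t)/(1+t^2)dt<\infty$) let $\kappa_\omega(t)=\int_1^\infty\omega(ts)s^{-2}ds$, $\varphi_\omega(t)=\omega(e^t)$, $\varphi^*_\omega(x)=\sup_{y\ge0}(xy-\varphi_\omega(y))$. Set $\kappa_\alpha=\kappa_{\widetilde\omega_{M^{(\alpha)}}}$ and $K^{(\alpha)}_j=\exp(\varphi^*_{\kappa_\alpha}(j))$, where $\kappa_\alpha$ is replaced by an equivalent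 (each $O$ of the other at $\infty$) normalized one ($=0$ on $[0,1]$) so that $1=K^{(\alpha)}_0\le K^{(\alpha)}_1$; $\mathfrak{K}(\mathfrak{M})=\{K^{(\alpha)}:\alpha>0\}$. *)

theory Defs
  imports "HOL-Analysis.Analysis" "HOL-Library.Landau_Symbols"
begin

definition wseq_rep :: "(nat \<Rightarrow> real) \<Rightarrow> (nat \<Rightarrow> real) \<Rightarrow> bool" where
  "wseq_rep M \<mu> \<longleftrightarrow> \<mu> 0 = 1 \<and> mono \<mu> \<and> filterlim \<mu> at_top sequentially
     \<and> (\<forall>k. M k = (\<Prod>i\<le>k. \<mu> i))"

definition weight_seq :: "(nat \<Rightarrow> real) \<Rightarrow> bool" where
  "weight_seq M \<longleftrightarrow> (\<exists>\<mu>. wseq_rep M \<mu>)"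

definition nq_weight_seq :: "(nat \<Rightarrow> real) \<Rightarrow> bool" where
  "nq_weight_seq M \<longleftrightarrow> (\<exists>\<mu>. wseq_rep M \<mu> \<and> summable (\<lambda>k. 1 / \<mu> k))"

definition weight_matrix :: "(real \<Rightarrow> nat \<Rightarrow> real) \<Rightarrow> bool" where
  "weight_matrix Mf \<longleftrightarrow> (\<forall>\<alpha>>0. weight_seq (Mf \<alpha>))
     \<and> (\<forall>\<alpha> \<beta>. 0 < \<alpha> \<longrightarrow> \<alpha> \<le> \<beta> \<longrightarrow> (\<forall>k. Mf \<alpha> k \<le> Mf \<beta> k))"

definition nq_weight_matrix :: "(real \<Rightarrow> nat \<Rightarrow> real) \<Rightarrow> bool" where
  "nq_weight_matrix Mf \<longleftrightarrow> weight_matrix Mf \<and> (\<forall>\<alpha>>0. nq_weight_seq (Mf \<alpha>))"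

text \<open>Associated function (used for t \<ge> 0).\<close>
definition assoc_fun :: "(nat \<Rightarrow> real) \<Rightarrow> real \<Rightarrow> real" where
  "assoc_fun M t = (if t = 0 then 0 else (SUP k. ln (t ^ k * M 0 / M k)))"

definition assoc_tilde :: "(nat \<Rightarrow> real) \<Rightarrow> real \<Rightarrow> real" where
  "assoc_tilde M t = assoc_fun M t + ln (1 + t\<^sup>2)"

definition pre_weight_fun :: "(real \<Rightarrow> real) \<Rightarrow> bool" where
  "pre_weight_fun \<omega> \<longleftrightarrow> continuous_on {0..} \<omega> \<and> mono_on {0..} \<omega> \<and> \<omega> 0 = 0
     \<and> (\<lambda>t. ln t) \<in> o[at_top](\<omega>) \<and> convex_on UNIV (\<lambda>t. \<omega> (exp t))"

definition kappa :: "(real \<Rightarrow> real) \<Rightarrow> real \<Rightarrow> real" where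
  "kappa \<omega> t = (LINT s:{1..}|lborel. \<omega> (t * s) / s\<^sup>2)"

definition phi_fun :: "(real \<Rightarrow> real) \<Rightarrow> real \<Rightarrow> real" where
  "phi_fun \<omega> y = \<omega> (exp y)"

definition phi_star :: "(real \<Rightarrow> real) \<Rightarrow> real \<Rightarrow> real" where
  "phi_star \<omega> x = (SUP y\<in>{0..}. x * y - phi_fun \<omega> y)"

definition Kseq :: "(real \<Rightarrow> real) \<Rightarrow> nat \<Rightarrow> real" where
  "Kseq \<kappa> j = exp (phi_star \<kappa> (real j))"

definition normalized_equiv :: "(real \<Rightarrow> real) \<Rightarrow> (real \<Rightarrow> real) \<Rightarrow> bool" where
  "normalized_equiv \<kappa> \<kappa>' \<longleftrightarrow> pre_weight_fun \<kappa>' \<and> (\<forall>t\<in>{0..1}. \<kappa>' t = 0)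
     \<and> \<kappa>' \<in> O[at_top](\<kappa>) \<and> \<kappa> \<in> O[at_top](\<kappa>')"

end

theory Submission
  imports Defs "HOL-Real_Asymp.Real_Asymp"
begin

text \<open>Since \<open>\<omega>\<^sub>M(t) \<le> \<Sum>\<^sub>k log\<^sup>+(t/\<mu>\<^sub>k)\<close> and \<open>log\<^sup>+(t/m)/t\<^sup>2\<close> integrates to \<open>1/m\<close>
  over \<open>[1,\<infinity>)\<close>, non-quasianalyticity makes \<open>\<kappa>\<^sub>\<alpha>\<close> finite. It inherits monotonicity and
  convexity in \<open>log t\<close> from \<open>\<omega>\<close>, dominates it, and is \<open>o(t)\<close> by dominated convergence.
  Replacing \<open>\<kappa>\<^sub>\<alpha>\<close> by the supremum over \<open>\<gamma> \<ge> \<alpha>\<close> of \<open>max 0 (\<kappa>\<^sub>\<gamma> - \<kappa>\<^sub>\<gamma>(1))\<close> gives a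
  family that vanishes on \<open>[0,1]\<close>, decreases in \<open>\<alpha>\<close> and stays within \<open>\<kappa>\<^sub>\<alpha>(1)\<close> of \<open>\<kappa>\<^sub>\<alpha>\<close>,
  hence is equivalent to it. As a supremum of affine functions, \<open>\<phi>\<^sup>*\<close> is convex, so each \<open>K\<close>
  is log-convex; the bound \<open>\<kappa>'(t) \<ge> j log t - log M\<^sub>j - \<kappa>\<^sub>\<alpha>(1)\<close> gives
  \<open>K\<^sub>j \<le> exp(\<kappa>\<^sub>\<alpha>(1)) M\<^sub>j\<close>, and \<open>\<kappa>' = o(t)\<close> gives \<open>(K\<^sub>j/j!)\<^sup>1\<^sup>/\<^sup>j \<rightarrow> \<infinity>\<close>, which also
  forces the quotients \<open>K\<^sub>j/K\<^sub>j\<^sub>-\<^sub>1\<close> to tend to infinity.\<close>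

lemma convex_on_cSUP:
  fixes f :: "'i \<Rightarrow> 'a::real_vector \<Rightarrow> real"
  assumes "A \<noteq> {}" "convex S" "\<And>i. i \<in> A \<Longrightarrow> convex_on S (f i)"
    and "\<And>x. x \<in> S \<Longrightarrow> bdd_above ((\<lambda>i. f i x) ` A)"
  shows "convex_on S (\<lambda>x. SUP i\<in>A. f i x)"
proof (rule convex_onI)
  fix t :: real and x y assume t: "0 < t" "t < 1" and xy: "x \<in> S" "y \<in> S"
  show "(SUP i\<in>A. f i ((1 - t) *\<^sub>R x + t *\<^sub>R y))
      \<le> (1 - t) * (SUP i\<in>A. f i x) + t * (SUP i\<in>A. f i y)"
  proof (rule cSUP_least[OF assms(1)])
    fix i assume i: "i \<in> A"
    have "f i ((1 - t) *\<^sub>R x + t *\<^sub>R y) \<le> (1 - t) * f i x + t * f i y"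
      using convex_onD[OF assms(3)[OF i]] t xy by simp
    also have "\<dots> \<le> (1 - t) * (SUP i\<in>A. f i x) + t * (SUP i\<in>A. f i y)"
      using t i xy by (intro add_mono mult_left_mono cSUP_upper assms(4)) auto
    finally show "f i ((1 - t) *\<^sub>R x + t *\<^sub>R y) \<le> \<dots>" .
  qed
qed (fact assms(2))

lemma convex_on_max:
  fixes f g :: "'a::real_vector \<Rightarrow> real"
  assumes "convex_on S f" "convex_on S g"
  shows "convex_on S (\<lambda>x. max (f x) (g x))"
proof (rule convex_onI)
  fix t :: real and x y assume t: "0 < t" "t < 1" and xy: "x \<in> S" "y \<in> S"
  have "f ((1 - t) *\<^sub>R x + t *\<^sub>R y) \<le> (1 - t) * max (f x) (g x) + t * max (f y) (g y)"
    using convex_onD[OF assms(1), of t x y] t xy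
    by (smt (verit) max.cobounded1 mult_left_mono)
  moreover have "g ((1 - t) *\<^sub>R x + t *\<^sub>R y) \<le> (1 - t) * max (f x) (g x) + t * max (f y) (g y)"
    using convex_onD[OF assms(2), of t x y] t xy
    by (smt (verit) max.cobounded2 mult_left_mono)
  ultimately show "max (f ((1 - t) *\<^sub>R x + t *\<^sub>R y)) (g ((1 - t) *\<^sub>R x + t *\<^sub>R y))
      \<le> (1 - t) * max (f x) (g x) + t * max (f y) (g y)"
    by simp
qed (use assms convex_on_imp_convex in blast)

lemma convex_on_ln_one_plus_exp_sq: "convex_on UNIV (\<lambda>x::real. ln (1 + (exp x)\<^sup>2))"
proof (rule convex_on_realI[where f' = "\<lambda>x. 2 - 2 / (1 + (exp x)\<^sup>2)"])
  fix x :: real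
  have pos: "1 + (exp x)\<^sup>2 > 0" by (simp add: add_pos_nonneg)
  have "((\<lambda>x. ln (1 + (exp x)\<^sup>2)) has_real_derivative
      (1 / (1 + (exp x)\<^sup>2)) * (0 + 2 * exp x * exp x)) (at x)"
    by (intro derivative_eq_intros) (use pos in auto)
  moreover have "(1 / (1 + (exp x)\<^sup>2)) * (0 + 2 * exp x * exp x) = 2 - 2 / (1 + (exp x)\<^sup>2)"
    using pos by (simp add: field_simps power2_eq_square)
  ultimately show "((\<lambda>x. ln (1 + (exp x)\<^sup>2)) has_real_derivative 2 - 2 / (1 + (exp x)\<^sup>2)) (at x)"
    by simp
next
  fix x y :: real assume "x \<le> y"
  then show "2 - 2 / (1 + (exp x)\<^sup>2) \<le> 2 - 2 / (1 + (exp y)\<^sup>2)"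
    by (intro diff_left_mono divide_left_mono power_mono) (auto simp: add_pos_nonneg)
qed auto

lemma ln_one_plus_sq_le:
  assumes "1 \<le> (t::real)" shows "ln (1 + t\<^sup>2) \<le> 1 + 2 * ln t"
proof -
  have "1 + t\<^sup>2 \<le> exp 1 * t\<^sup>2"
    using exp_ge_add_one_self[of 1] one_le_power[OF assms, of 2]
      mult_right_mono[of 2 "exp 1" "t\<^sup>2"] by simp
  then have "ln (1 + t\<^sup>2) \<le> ln (exp 1 * t\<^sup>2)"
    using assms by (subst ln_le_cancel_iff) (auto simp: add_pos_nonneg)
  also have "\<dots> = 1 + 2 * ln t"
    using assms by (simp add: ln_mult_pos ln_realpow)
  finally show ?thesis .
qed

lemma prod_le_power_of_mono:
  fixes \<mu> :: "nat \<Rightarrow> real"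
  assumes "mono \<mu>" "\<mu> 0 = 1"
  shows "(\<Prod>i\<le>j. \<mu> i) \<le> \<mu> j ^ j"
proof -
  have "(\<Prod>i\<le>j. \<mu> i) = (\<Prod>i=1..j. \<mu> i)"
    using assms(2) by (simp add: atMost_atLeast0 prod.atLeast_Suc_atMost)
  also have "\<dots> \<le> (\<Prod>i=1..j. \<mu> j)"
    using assms monoD[OF assms(1), of 0] by (intro prod_mono) (auto intro: monoD order.trans[of 0 1])
  finally show ?thesis by simp
qed

lemma ln_smallo_of_lower_bounds:
  fixes f :: "real \<Rightarrow> real"
  assumes "\<And>k::nat. \<exists>C. \<forall>t>0. k * ln t - C \<le> f t"
  shows "(\<lambda>t. ln t) \<in> o[at_top](f)"
proof (rule landau_o.smallI)
  fix c :: real assume c: "0 < c"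
  obtain k :: nat where k: "2 / c \<le> k"
    using real_arch_simple by blast
  obtain C where C: "\<And>t. 0 < t \<Longrightarrow> k * ln t - C \<le> f t"
    using assms by blast
  have "norm (ln t) \<le> c * norm (f t)" if t: "max 1 (exp (c * C)) \<le> t" for t
  proof -
    have "c * C \<le> ln t" "0 \<le> ln t"
      using t by (auto simp: ln_ge_iff[symmetric])
    moreover have "2 * ln t \<le> c * k * ln t"
      using k c \<open>0 \<le> ln t\<close> by (intro mult_right_mono) (simp_all add: field_simps)
    moreover have "c * (k * ln t - C) \<le> c * f t"
      using C[of t] t c by (intro mult_left_mono) auto
    ultimately have "ln t \<le> c * f t"
      by (simp add: algebra_simps)
    also have "\<dots> \<le> c * norm (f t)"
      using c by (intro mult_left_mono) auto
    finally show ?thesis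
      using \<open>0 \<le> ln t\<close> by simp
  qed
  then show "eventually (\<lambda>t. norm (ln t) \<le> c * norm (f t)) at_top"
    unfolding eventually_at_top_linorder by blast
qed

lemma bigo_of_bounded_difference:
  fixes f g :: "real \<Rightarrow> real"
  assumes "filterlim g at_top at_top" "eventually (\<lambda>t. \<bar>f t - g t\<bar> \<le> c) at_top"
  shows "f \<in> O[at_top](g)" and "g \<in> O[at_top](f)"
proof -
  have "eventually (\<lambda>t. max 0 (2 * c) \<le> g t) at_top"
    using assms(1) unfolding filterlim_at_top by blast
  with assms(2) have "eventually (\<lambda>t. norm (f t) \<le> 2 * norm (g t) \<and> norm (g t) \<le> 2 * norm (f t)) at_top"
    by eventually_elim auto
  then show "f \<in> O[at_top](g)" "g \<in> O[at_top](f)"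
    by (auto intro!: bigoI[where c = 2] elim: eventually_mono)
qed

lemma nn_integral_inverse_sq: "(\<integral>\<^sup>+v. ennreal (indicator {1..} v / v\<^sup>2) \<partial>lborel) = 1"
proof -
  have "(\<integral>\<^sup>+v. ennreal (indicator {1..} v / v\<^sup>2) \<partial>lborel)
      = (\<integral>\<^sup>+v. ennreal (1 / v\<^sup>2) * indicator {1..} v \<partial>lborel)"
    by (rule nn_integral_cong) (simp add: indicator_def)
  also have "\<dots> = ennreal (0 - (- 1 / 1))"
  proof (rule nn_integral_FTC_atLeast[where F = "\<lambda>v. - 1 / v"])
    fix x :: real assume "1 \<le> x"
    then show "((\<lambda>v. - 1 / v) has_real_derivative 1 / x\<^sup>2) (at x)"
      by (auto intro!: derivative_eq_intros simp: power2_eq_square)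
  qed (auto, real_asymp)
  finally show ?thesis by simp
qed

lemma integrable_inverse_sq: "integrable lborel (\<lambda>s::real. indicator {1..} s * (1 / s\<^sup>2))"
  and integral_inverse_sq: "integral\<^sup>L lborel (\<lambda>s::real. indicator {1..} s * (1 / s\<^sup>2)) = 1"
proof -
  have m: "(\<lambda>s::real. indicator {1..} s * (1 / s\<^sup>2)) \<in> borel_measurable lborel" by measurable
  show "integrable lborel (\<lambda>s::real. indicator {1..} s * (1 / s\<^sup>2))"
    by (rule integrableI_nonneg[OF m]) (auto simp: nn_integral_inverse_sq)
  show "integral\<^sup>L lborel (\<lambda>s::real. indicator {1..} s * (1 / s\<^sup>2)) = 1"
    by (subst integral_eq_nn_integral[OF m]) (auto simp: nn_integral_inverse_sq)
qed

lemma nn_integral_ln_plus_over_sq: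
  assumes "1 \<le> m"
  shows "(\<integral>\<^sup>+v. ennreal (indicator {1..} v * max 0 (ln (v / m)) / v\<^sup>2) \<partial>lborel) = ennreal (1 / m)"
proof -
  have "(\<integral>\<^sup>+v. ennreal (indicator {1..} v * max 0 (ln (v / m)) / v\<^sup>2) \<partial>lborel)
      = (\<integral>\<^sup>+v. ennreal (ln (v / m) / v\<^sup>2) * indicator {m..} v \<partial>lborel)"
  proof (rule nn_integral_cong)
    fix v :: real
    show "ennreal (indicator {1..} v * max 0 (ln (v / m)) / v\<^sup>2)
        = ennreal (ln (v / m) / v\<^sup>2) * indicator {m..} v"
    proof (cases "m \<le> v")
      case False
      then have "v / m < 1" "0 < v \<Longrightarrow> ln (v / m) < 0" using assms by (auto simp: divide_simps)
      then show ?thesis using False by (auto simp: indicator_def max_def)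
    qed (use assms in \<open>simp add: indicator_def\<close>)
  qed
  also have "\<dots> = ennreal (0 - (- (ln m - ln m + 1) / m))"
  proof (rule nn_integral_FTC_atLeast[where F = "\<lambda>v. - (ln v - ln m + 1) / v"])
    fix x assume "m \<le> x"
    then have x: "0 < x" using assms by simp
    show "((\<lambda>v. - (ln v - ln m + 1) / v) has_real_derivative ln (x / m) / x\<^sup>2) (at x)"
      using x assms
      by (auto intro!: derivative_eq_intros simp: field_simps power2_eq_square ln_div)
    show "0 \<le> ln (x / m) / x\<^sup>2" using \<open>m \<le> x\<close> assms by simp
  qed (measurable, real_asymp)
  finally show ?thesis using assms by simp
qed

lemma borel_measurable_scaled_over_sq:
  fixes W :: "real \<Rightarrow> real"
  assumes "mono_on {0..} W" "0 \<le> t"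
  shows "(\<lambda>s. indicator {1..} s * (W (t * s) / s\<^sup>2)) \<in> borel_measurable borel"
proof -
  have [measurable]: "(\<lambda>v. W (max 0 v)) \<in> borel_measurable borel"
    using assms(1) by (intro borel_measurable_mono) (auto simp: mono_def intro: mono_onD)
  have "(\<lambda>s. indicator {1..} s * (W (max 0 (t * s)) / s\<^sup>2)) \<in> borel_measurable borel"
    by measurable
  also have "(\<lambda>s. indicator {1..} s * (W (max 0 (t * s)) / s\<^sup>2))
      = (\<lambda>s. indicator {1..} s * (W (t * s) / s\<^sup>2))"
    using assms(2) by (auto simp: indicator_def fun_eq_iff max_def)
  finally show ?thesis .
qed

lemma integral_over_sq_mono:
  fixes f g :: "real \<Rightarrow> real"
  assumes "integrable lborel (\<lambda>s. indicator {1..} s * (f s / s\<^sup>2))"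
    and "integrable lborel (\<lambda>s. indicator {1..} s * (g s / s\<^sup>2))"
    and "\<And>s. 1 \<le> s \<Longrightarrow> f s \<le> g s"
  shows "integral\<^sup>L lborel (\<lambda>s. indicator {1..} s * (f s / s\<^sup>2))
       \<le> integral\<^sup>L lborel (\<lambda>s. indicator {1..} s * (g s / s\<^sup>2))"
  using assms(3) by (intro integral_mono[OF assms(1,2)]) (simp add: indicator_def divide_right_mono)

section \<open>Weight sequences and their associated functions\<close>

lemma wseq_rep_quotient_ge_one: "wseq_rep M \<mu> \<Longrightarrow> 1 \<le> \<mu> i"
  unfolding wseq_rep_def by (metis monoD zero_le)

lemma wseq_rep_0: "wseq_rep M \<mu> \<Longrightarrow> M 0 = 1"
  unfolding wseq_rep_def by auto

lemma wseq_rep_ge_one: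
  assumes "wseq_rep M \<mu>" shows "1 \<le> M k"
proof -
  have "1 \<le> (\<Prod>i\<le>k. \<mu> i)"
    by (intro prod_ge_1 wseq_rep_quotient_ge_one[OF assms])
  then show ?thesis
    using assms unfolding wseq_rep_def by simp
qed

lemma wseq_rep_ln_sum:
  assumes "wseq_rep M \<mu>" "0 < t"
  shows "k * ln t - ln (M k) = (\<Sum>i=1..k. ln (t / \<mu> i))"
proof -
  have \<mu>_pos: "0 < \<mu> i" for i
    using wseq_rep_quotient_ge_one[OF assms(1)] by (rule less_le_trans[OF zero_less_one])
  then have "ln (M k) = (\<Sum>i\<le>k. ln (\<mu> i))"
    using assms(1) unfolding wseq_rep_def by (simp add: ln_prod less_imp_neq[symmetric])
  also have "\<dots> = (\<Sum>i=1..k. ln (\<mu> i))"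
    using assms(1) unfolding wseq_rep_def
    by (simp add: atMost_atLeast0 sum.atLeast_Suc_atMost)
  finally show ?thesis
    using assms(2) \<mu>_pos by (simp add: ln_div sum_subtractf less_imp_neq[symmetric])
qed

text \<open>The quotients \<open>K j / K (j - 1)\<close> increase by log-convexity, and they tend to infinity
  since \<open>K j \<le> (K j / K (j - 1))\<^sup>j\<close>.\<close>
lemma weight_seq_of_log_convex:
  fixes K :: "nat \<Rightarrow> real"
  assumes pos: "\<And>j. 0 < K j" and "K 0 = 1" "1 \<le> K 1"
    and log_convex: "\<And>j. K (j + 1) * K (j + 1) \<le> K j * K (j + 2)"
    and root: "filterlim (\<lambda>j. root j (K j)) at_top sequentially"
  shows "weight_seq K"
proof -
  define \<mu> where "\<mu> j = (if j = 0 then 1 else K j / K (j - 1))" for j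
  have mono: "mono \<mu>"
  proof (rule mono_iff_le_Suc[THEN iffD2], intro allI)
    fix j show "\<mu> j \<le> \<mu> (Suc j)"
      using assms log_convex[of "j - 1"] pos[of j] pos[of "j - 1"]
      by (cases j) (simp_all add: \<mu>_def field_simps)
  qed
  have prod: "K j = (\<Prod>i\<le>j. \<mu> i)" for j
  proof (induction j)
    case (Suc j)
    have "(\<Prod>i\<le>Suc j. \<mu> i) = K j * \<mu> (Suc j)"
      by (simp only: prod.atMost_Suc Suc.IH)
    then show ?case
      using pos[of j] by (simp add: \<mu>_def)
  qed (simp add: \<mu>_def assms)
  have "eventually (\<lambda>j. root j (K j) \<le> \<mu> j) sequentially"
  proof (rule eventually_sequentiallyI[of 1])
    fix j :: nat assume "1 \<le> j"
    have "1 \<le> \<mu> j"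
      using monoD[OF mono, of 0 j] by (simp add: \<mu>_def)
    moreover have "K j \<le> \<mu> j ^ j"
      unfolding prod by (rule prod_le_power_of_mono[OF mono]) (simp add: \<mu>_def)
    ultimately show "root j (K j) \<le> \<mu> j"
      using \<open>1 \<le> j\<close> real_root_le_iff[of j "K j" "\<mu> j ^ j"] by (simp add: real_root_power_cancel)
  qed
  then have "filterlim \<mu> at_top sequentially"
    by (rule filterlim_at_top_mono[OF root])
  then have "wseq_rep K \<mu>"
    using mono prod by (simp add: wseq_rep_def \<mu>_def)
  then show ?thesis
    unfolding weight_seq_def by blast
qed

lemma summable_ln_plus_quotients:
  assumes "wseq_rep M \<mu>" "0 < t"
  shows "summable (\<lambda>i. max 0 (ln (t / \<mu> i)))"
proof -
  have "eventually (\<lambda>i. t \<le> \<mu> i) sequentially"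
    using assms(1) unfolding wseq_rep_def by (simp add: filterlim_at_top)
  then obtain N where N: "\<And>i. N \<le> i \<Longrightarrow> t \<le> \<mu> i"
    by (auto simp: eventually_sequentially)
  show ?thesis
  proof (rule summable_finite[of "{..<N}"])
    fix i assume "i \<notin> {..<N}"
    then have "t / \<mu> i \<le> 1"
      using N[of i] wseq_rep_quotient_ge_one[OF assms(1), of i] by simp
    then show "max 0 (ln (t / \<mu> i)) = 0"
      using assms(2) wseq_rep_quotient_ge_one[OF assms(1), of i] by simp
  qed simp
qed

lemma assoc_term_le_suminf:
  assumes "wseq_rep M \<mu>" "0 < t"
  shows "k * ln t - ln (M k) \<le> (\<Sum>i. max 0 (ln (t / \<mu> i)))"
proof -
  have "k * ln t - ln (M k) \<le> (\<Sum>i=1..k. max 0 (ln (t / \<mu> i)))"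
    unfolding wseq_rep_ln_sum[OF assms] by (intro sum_mono) simp
  also have "\<dots> \<le> (\<Sum>i. max 0 (ln (t / \<mu> i)))"
    by (intro sum_le_suminf summable_ln_plus_quotients[OF assms]) auto
  finally show ?thesis .
qed

lemma assoc_fun_eq_SUP:
  assumes "wseq_rep M \<mu>" "0 < t"
  shows "assoc_fun M t = (SUP k. k * ln t - ln (M k))"
proof -
  have "ln (t ^ k * M 0 / M k) = k * ln t - ln (M k)" for k
    using assms wseq_rep_ge_one[OF assms(1), of k]
    by (simp add: wseq_rep_0 ln_div ln_realpow)
  then show ?thesis
    using assms(2) by (simp add: assoc_fun_def)
qed

lemma bdd_above_assoc_terms:
  "wseq_rep M \<mu> \<Longrightarrow> 0 < t \<Longrightarrow> bdd_above (range (\<lambda>k. k * ln t - ln (M k)))"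
  by (rule bdd_aboveI2) (rule assoc_term_le_suminf)

lemma assoc_fun_ge:
  "wseq_rep M \<mu> \<Longrightarrow> 0 < t \<Longrightarrow> k * ln t - ln (M k) \<le> assoc_fun M t"
  unfolding assoc_fun_eq_SUP by (intro cSUP_upper bdd_above_assoc_terms) auto

lemma assoc_fun_le_suminf:
  "wseq_rep M \<mu> \<Longrightarrow> 0 < t \<Longrightarrow> assoc_fun M t \<le> (\<Sum>i. max 0 (ln (t / \<mu> i)))"
  by (simp add: assoc_fun_eq_SUP cSUP_least assoc_term_le_suminf)

lemma assoc_fun_nonneg:
  assumes "wseq_rep M \<mu>" "0 \<le> t"
  shows "0 \<le> assoc_fun M t"
  using assoc_fun_ge[OF assms(1), of t 0] assms
  by (cases "t = 0") (simp_all add: assoc_fun_def wseq_rep_0)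

lemma assoc_fun_antimono:
  assumes "wseq_rep M \<mu>" "wseq_rep N \<nu>" "\<And>k. M k \<le> N k" "0 \<le> t"
  shows "assoc_fun N t \<le> assoc_fun M t"
proof (cases "t = 0")
  case False
  then have t: "0 < t" using assms(4) by simp
  have "ln (M k) \<le> ln (N k)" for k
    using assms(3)[of k] wseq_rep_ge_one[OF assms(1), of k] by simp
  then show ?thesis
    unfolding assoc_fun_eq_SUP[OF assms(1) t] assoc_fun_eq_SUP[OF assms(2) t]
    by (intro cSUP_mono bdd_above_assoc_terms[OF assms(1) t]) (auto intro: diff_left_mono)
qed (simp add: assoc_fun_def)

lemma mono_on_assoc_fun:
  assumes "wseq_rep M \<mu>" shows "mono_on {0..} (assoc_fun M)"
proof (rule mono_onI)
  fix s t :: real assume st: "s \<in> {0..}" "t \<in> {0..}" "s \<le> t"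
  show "assoc_fun M s \<le> assoc_fun M t"
  proof (cases "s = 0")
    case False
    then have "0 < s" "0 < t" using st by auto
    then have "k * ln s - ln (M k) \<le> k * ln t - ln (M k)" for k
      using st(3) by (simp add: mult_left_mono)
    then show ?thesis
      unfolding assoc_fun_eq_SUP[OF assms \<open>0 < s\<close>] assoc_fun_eq_SUP[OF assms \<open>0 < t\<close>]
      by (intro cSUP_mono bdd_above_assoc_terms[OF assms \<open>0 < t\<close>]) blast+
  qed (use assoc_fun_nonneg[OF assms] st in \<open>simp add: assoc_fun_def\<close>)
qed

lemma convex_on_assoc_fun_exp:
  assumes "wseq_rep M \<mu>" shows "convex_on UNIV (\<lambda>x. assoc_fun M (exp x))"
proof -
  have "convex_on UNIV (\<lambda>x. SUP k. k * x - ln (M k))"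
    using bdd_above_assoc_terms[OF assms exp_gt_zero]
    by (intro convex_on_cSUP convex_on_diff convex_on_cmul) (auto simp: convex_on_ident concave_on_const)
  then show ?thesis
    by (simp add: assoc_fun_eq_SUP[OF assms])
qed

lemma assoc_tilde_nonneg: "wseq_rep M \<mu> \<Longrightarrow> 0 \<le> t \<Longrightarrow> 0 \<le> assoc_tilde M t"
  by (simp add: assoc_tilde_def assoc_fun_nonneg)

lemma assoc_tilde_ge:
  assumes "wseq_rep M \<mu>" "0 < t" shows "k * ln t - ln (M k) \<le> assoc_tilde M t"
proof -
  have "0 \<le> ln (1 + t\<^sup>2)" by (rule ln_ge_zero) simp
  then show ?thesis using assoc_fun_ge[OF assms, of k] unfolding assoc_tilde_def by linarith
qed

lemma assoc_tilde_le_suminf: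
  assumes "wseq_rep M \<mu>" "1 \<le> t"
  shows "assoc_tilde M t \<le> 1 + 3 * (\<Sum>i. max 0 (ln (t / \<mu> i)))"
proof -
  have "ln t = max 0 (ln (t / \<mu> 0))"
    using assms unfolding wseq_rep_def by simp
  also have "\<dots> \<le> (\<Sum>i. max 0 (ln (t / \<mu> i)))"
    using summable_ln_plus_quotients[OF assms(1), of t] assms(2)
    by (intro sum_le_suminf[where I = "{0}", simplified]) auto
  finally show ?thesis
    using assoc_fun_le_suminf[OF assms(1), of t] ln_one_plus_sq_le[OF assms(2)] assms(2)
    by (simp add: assoc_tilde_def)
qed

lemma assoc_tilde_antimono:
  "wseq_rep M \<mu> \<Longrightarrow> wseq_rep N \<nu> \<Longrightarrow> (\<And>k. M k \<le> N k) \<Longrightarrow> 0 \<le> t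
   \<Longrightarrow> assoc_tilde N t \<le> assoc_tilde M t"
  by (simp add: assoc_tilde_def assoc_fun_antimono)

lemma mono_on_assoc_tilde: "wseq_rep M \<mu> \<Longrightarrow> mono_on {0..} (assoc_tilde M)"
  unfolding assoc_tilde_def
  by (intro mono_onI add_mono mono_onD[OF mono_on_assoc_fun])
    (auto intro!: power_mono simp: add_pos_nonneg)

lemma convex_on_assoc_tilde_exp:
  "wseq_rep M \<mu> \<Longrightarrow> convex_on UNIV (\<lambda>x. assoc_tilde M (exp x))"
  unfolding assoc_tilde_def
  by (intro convex_on_add convex_on_assoc_fun_exp convex_on_ln_one_plus_exp_sq)

lemma assoc_tilde_over_sq_le:
  assumes "wseq_rep M \<mu>" "1 \<le> v"
  shows "assoc_tilde M v / v\<^sup>2 \<le> 1 / v\<^sup>2 + 3 * (\<Sum>i. max 0 (ln (v / \<mu> i)) / v\<^sup>2)"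
proof -
  have "assoc_tilde M v / v\<^sup>2 \<le> (1 + 3 * (\<Sum>i. max 0 (ln (v / \<mu> i)))) / v\<^sup>2"
    using assoc_tilde_le_suminf[OF assms] by (simp add: divide_right_mono)
  also have "\<dots> = 1 / v\<^sup>2 + 3 * (\<Sum>i. max 0 (ln (v / \<mu> i)) / v\<^sup>2)"
    using assms summable_ln_plus_quotients[OF assms(1), of v]
    by (simp add: add_divide_distrib suminf_divide)
  finally show ?thesis .
qed

lemma set_integrable_assoc_tilde_over_sq:
  assumes "wseq_rep M \<mu>" "summable (\<lambda>k. 1 / \<mu> k)"
  shows "set_integrable lborel {1..} (\<lambda>v. assoc_tilde M v / v\<^sup>2)"
  unfolding set_integrable_def
proof (rule integrableI_nonneg)
  show "(\<lambda>v. indicator {1..} v *\<^sub>R (assoc_tilde M v / v\<^sup>2)) \<in> borel_measurable lborel"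
    using borel_measurable_scaled_over_sq[OF mono_on_assoc_tilde[OF assms(1)], of 1] by simp
  show "AE v in lborel. 0 \<le> indicator {1..} v *\<^sub>R (assoc_tilde M v / v\<^sup>2)"
    using assoc_tilde_nonneg[OF assms(1)] by (auto simp: indicator_def)
  define q where "q i v = ennreal (indicator {1..} v * max 0 (ln (v / \<mu> i)) / v\<^sup>2)" for i v
  have "ennreal (indicator {1..} v *\<^sub>R (assoc_tilde M v / v\<^sup>2))
      \<le> ennreal (indicator {1..} v / v\<^sup>2) + 3 * (\<Sum>i. q i v)" for v
  proof (cases "1 \<le> v")
    case True
    let ?S = "\<Sum>i. max 0 (ln (v / \<mu> i)) / v\<^sup>2"
    have summable: "summable (\<lambda>i. max 0 (ln (v / \<mu> i)) / v\<^sup>2)"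
      using True by (intro summable_divide summable_ln_plus_quotients[OF assms(1)]) simp
    have "ennreal (indicator {1..} v *\<^sub>R (assoc_tilde M v / v\<^sup>2)) \<le> ennreal (1 / v\<^sup>2 + 3 * ?S)"
      using True assoc_tilde_over_sq_le[OF assms(1) True] by (simp add: ennreal_leI)
    also have "\<dots> = ennreal (1 / v\<^sup>2) + 3 * ennreal ?S"
      using suminf_nonneg[OF summable] by (simp add: ennreal_mult)
    also have "ennreal ?S = (\<Sum>i. q i v)"
      using True summable by (simp add: q_def suminf_ennreal2)
    finally show ?thesis
      using True by simp
  qed (simp add: indicator_def)
  then have "(\<integral>\<^sup>+v. ennreal (indicator {1..} v *\<^sub>R (assoc_tilde M v / v\<^sup>2)) \<partial>lborel)
      \<le> (\<integral>\<^sup>+v. ennreal (indicator {1..} v / v\<^sup>2) + 3 * (\<Sum>i. q i v) \<partial>lborel)"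
    by (rule nn_integral_mono)
  also have "\<dots> = 1 + 3 * (\<Sum>i. \<integral>\<^sup>+v. q i v \<partial>lborel)"
    by (simp add: q_def nn_integral_add nn_integral_cmult nn_integral_suminf nn_integral_inverse_sq)
  also have "(\<Sum>i. \<integral>\<^sup>+v. q i v \<partial>lborel) = ennreal (\<Sum>i. 1 / \<mu> i)"
    using assms(2) wseq_rep_quotient_ge_one[OF assms(1)]
    by (simp add: q_def nn_integral_ln_plus_over_sq order.trans[OF zero_le_one] suminf_ennreal2)
  finally show "(\<integral>\<^sup>+v. ennreal (indicator {1..} v *\<^sub>R (assoc_tilde M v / v\<^sup>2)) \<partial>lborel) < \<infinity>"
    by (simp add: ennreal_mult_less_top le_less_trans)
qed

section \<open>The function \<open>\<kappa>\<close> of a non-quasianalytic weight\<close>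

lemma kappa_eq_integral: "kappa W t = integral\<^sup>L lborel (\<lambda>s. indicator {1..} s * (W (t * s) / s\<^sup>2))"
  unfolding kappa_def set_lebesgue_integral_def by simp

locale nonquasianalytic =
  fixes W :: "real \<Rightarrow> real"
  assumes nonneg: "\<And>t. 0 \<le> t \<Longrightarrow> 0 \<le> W t"
    and mono: "mono_on {0..} W"
    and integrable_over_sq: "set_integrable lborel {1..} (\<lambda>v. W v / v\<^sup>2)"

begin

lemma integrable_tail:
  "integrable lborel (\<lambda>v. indicator {t..} v * (indicator {1..} v * (W v / v\<^sup>2)))"
  using integrable_mult_indicator[OF _ integrable_over_sq[unfolded set_integrable_def], of "{t..}"]
  by simp

lemma scaled_eq_tail:
  assumes "1 \<le> t"
  shows "indicator {1..} s * (W (t * s) / s\<^sup>2)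
    = t\<^sup>2 * (indicator {t..} (t * s) * (indicator {1..} (t * s) * (W (t * s) / (t * s)\<^sup>2)))"
  using assms by (auto simp: indicator_def power_mult_distrib order.trans[of 1 t])

lemma integrable_scaled:
  assumes "0 < t"
  shows "integrable lborel (\<lambda>s. indicator {1..} s * (W (t * s) / s\<^sup>2))"
proof -
  define t' where "t' = max 1 t"
  have t': "1 \<le> t'" by (simp add: t'_def)
  have "integrable lborel (\<lambda>s. t'\<^sup>2 * (indicator {t'..} (t' * s)
      * (indicator {1..} (t' * s) * (W (t' * s) / (t' * s)\<^sup>2))))"
    using lborel_integrable_real_affine[OF integrable_tail[of t'], where c = t' and t = 0] t'
    by (intro integrable_mult_right) simp
  then have integrable_t': "integrable lborel (\<lambda>s. indicator {1..} s * (W (t' * s) / s\<^sup>2))"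
    by (simp only: scaled_eq_tail[OF t'])
  show ?thesis
  proof (rule Bochner_Integration.integrable_bound[OF integrable_t'])
    show "(\<lambda>s. indicator {1..} s * (W (t * s) / s\<^sup>2)) \<in> borel_measurable lborel"
      using borel_measurable_scaled_over_sq[OF mono] assms by simp
    have "W (t * s) \<le> W (t' * s)" if "1 \<le> s" for s
      using that assms by (intro mono_onD[OF mono]) (auto simp: t'_def mult_right_mono)
    moreover have "0 \<le> W (t * s)" "0 \<le> W (t' * s)" if "1 \<le> s" for s
      using that assms t' by (auto intro: nonneg)
    ultimately show "AE s in lborel. norm (indicator {1..} s * (W (t * s) / s\<^sup>2))
        \<le> norm (indicator {1..} s * (W (t' * s) / s\<^sup>2))"
      by (intro AE_I2) (simp add: indicator_def divide_right_mono)
  qed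
qed

lemma kappa_div_eq_tail:
  assumes "1 \<le> t"
  shows "kappa W t / t = integral\<^sup>L lborel (\<lambda>v. indicator {t..} v * (indicator {1..} v * (W v / v\<^sup>2)))"
    (is "_ = integral\<^sup>L lborel ?g")
proof -
  have "integral\<^sup>L lborel ?g = \<bar>t\<bar> *\<^sub>R integral\<^sup>L lborel (\<lambda>s. ?g (0 + t * s))"
    using assms by (intro lborel_integral_real_affine) simp
  also have "(\<lambda>s. ?g (0 + t * s)) = (\<lambda>s. (1 / t\<^sup>2) * (indicator {1..} s * (W (t * s) / s\<^sup>2)))"
  proof
    fix s
    have "?g (0 + t * s) = (1 / t\<^sup>2) * (t\<^sup>2 * ?g (t * s))"
      using assms by simp
    then show "?g (0 + t * s) = (1 / t\<^sup>2) * (indicator {1..} s * (W (t * s) / s\<^sup>2))"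
      by (simp only: scaled_eq_tail[OF assms])
  qed
  also have "integral\<^sup>L lborel \<dots> = (1 / t\<^sup>2) * kappa W t"
    by (simp only: integral_mult_right_zero kappa_eq_integral)
  finally show ?thesis
    using assms by (simp add: power2_eq_square)
qed

lemma le_kappa:
  assumes "0 < t" shows "W t \<le> kappa W t"
proof -
  have "W t = integral\<^sup>L lborel (\<lambda>s. W t * (indicator {1..} s * (1 / s\<^sup>2)))"
    by (simp only: integral_mult_right_zero integral_inverse_sq)
  also have "\<dots> = integral\<^sup>L lborel (\<lambda>s. indicator {1..} s * (W t / s\<^sup>2))"
    by (rule Bochner_Integration.integral_cong) auto
  also have "\<dots> \<le> kappa W t"
    unfolding kappa_eq_integral
    using integrable_mult_right[OF integrable_inverse_sq, of "W t"] assms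
    by (intro integral_over_sq_mono integrable_scaled mono_onD[OF mono])
      (auto simp: mult_le_cancel_left1 mult.commute)
  finally show ?thesis .
qed

lemma kappa_nonneg: "0 < t \<Longrightarrow> 0 \<le> kappa W t"
  using le_kappa nonneg[of t] by force

lemma kappa_mono:
  assumes "0 < s" "s \<le> t" shows "kappa W s \<le> kappa W t"
  unfolding kappa_eq_integral using assms
  by (intro integral_over_sq_mono integrable_scaled mono_onD[OF mono]) (auto simp: mult_right_mono)

lemma kappa_div_tendsto_zero: "((\<lambda>t. kappa W t / t) \<longlongrightarrow> 0) at_top"
proof -
  define f where "f v = indicator {1..} v * (W v / v\<^sup>2)" for v :: real
  have f: "integrable lborel f"
    using integrable_over_sq unfolding set_integrable_def f_def by simp
  have tail_measurable: "(\<lambda>v. indicator {t..} v * f v) \<in> borel_measurable lborel" for t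
    using f by measurable
  have tail_vanishes: "AE v in lborel. ((\<lambda>t. indicator {t..} v * f v) \<longlongrightarrow> 0) at_top"
  proof (rule AE_I2)
    fix v :: real
    have "eventually (\<lambda>t. indicator {t..} v * f v = 0) at_top"
      using eventually_gt_at_top[of v] by eventually_elim (simp add: indicator_def)
    then show "((\<lambda>t. indicator {t..} v * f v) \<longlongrightarrow> 0) at_top"
      by (rule tendsto_eventually)
  qed
  have dominated: "eventually (\<lambda>t. AE v in lborel. norm (indicator {t..} v * f v) \<le> f v) at_top"
    using nonneg by (auto simp: f_def indicator_def)
  have "((\<lambda>t. integral\<^sup>L lborel (\<lambda>v. indicator {t..} v * f v)) \<longlongrightarrow> 0) at_top"
    using integral_dominated_convergence_at_top[OF _ tail_measurable f tail_vanishes dominated]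
    by simp
  moreover have "eventually (\<lambda>t. integral\<^sup>L lborel (\<lambda>v. indicator {t..} v * f v) = kappa W t / t) at_top"
    using eventually_ge_at_top[of 1] by eventually_elim (simp add: kappa_div_eq_tail f_def)
  ultimately show ?thesis
    by (rule Lim_transform_eventually)
qed

lemma convex_on_kappa_exp:
  assumes convex: "convex_on UNIV (\<lambda>x. W (exp x))"
  shows "convex_on UNIV (\<lambda>x. kappa W (exp x))"
proof (rule convex_onI)
  fix u x y :: real assume u: "0 < u" "u < 1"
  define z where "z = (1 - u) *\<^sub>R x + u *\<^sub>R y"
  define f where "f a = (\<lambda>s. indicator {1..} s * (W (exp a * s) / s\<^sup>2))" for a
  have integrable: "integrable lborel (f a)" for a
    unfolding f_def by (rule integrable_scaled) simp
  have "f z s \<le> (1 - u) * f x s + u * f y s" for s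
  proof (cases "1 \<le> s")
    case True
    have "(1 - u) *\<^sub>R (x + ln s) + u *\<^sub>R (y + ln s) = z + ln s"
      by (simp add: z_def algebra_simps)
    then have "exp z * s = exp ((1 - u) *\<^sub>R (x + ln s) + u *\<^sub>R (y + ln s))"
      using True by (simp add: exp_add)
    then have "W (exp z * s) \<le> (1 - u) * W (exp x * s) + u * W (exp y * s)"
      using convex_onD[OF convex, of u "x + ln s" "y + ln s"] u True by (simp add: exp_add)
    then have "W (exp z * s) / s\<^sup>2 \<le> ((1 - u) * W (exp x * s) + u * W (exp y * s)) / s\<^sup>2"
      by (simp add: divide_right_mono)
    then show ?thesis
      using True by (simp add: f_def add_divide_distrib)
  qed (simp add: f_def)
  then have "integral\<^sup>L lborel (f z) \<le> integral\<^sup>L lborel (\<lambda>s. (1 - u) * f x s + u * f y s)"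
    by (intro integral_mono integrable Bochner_Integration.integrable_add integrable_mult_right)
  also have "\<dots> = (1 - u) * integral\<^sup>L lborel (f x) + u * integral\<^sup>L lborel (f y)"
    by (simp add: integrable)
  finally show "kappa W (exp ((1 - u) *\<^sub>R x + u *\<^sub>R y))
      \<le> (1 - u) * kappa W (exp x) + u * kappa W (exp y)"
    by (simp add: z_def f_def kappa_eq_integral)
qed simp

lemma kappa_le_kappa:
  assumes "nonquasianalytic V" "\<And>t. 0 \<le> t \<Longrightarrow> V t \<le> W t" "0 < t"
  shows "kappa V t \<le> kappa W t"
  unfolding kappa_eq_integral using assms
  by (intro integral_over_sq_mono integrable_scaled nonquasianalytic.integrable_scaled) auto

end

lemma nonquasianalytic_assoc_tilde:
  assumes "nq_weight_seq M" shows "nonquasianalytic (assoc_tilde M)"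
proof -
  obtain \<mu> where "wseq_rep M \<mu>" "summable (\<lambda>k. 1 / \<mu> k)"
    using assms unfolding nq_weight_seq_def by blast
  then show ?thesis
    by unfold_locales
      (auto intro: assoc_tilde_nonneg mono_on_assoc_tilde set_integrable_assoc_tilde_over_sq)
qed

section \<open>Normalization of a decreasing family\<close>

text \<open>The supremum over all \<open>\<gamma> \<ge> \<alpha>\<close> keeps the normalized family decreasing in \<open>\<alpha>\<close>,
  which a normalization of each \<open>k \<alpha>\<close> separately would not.\<close>
definition normalized_family :: "(real \<Rightarrow> real \<Rightarrow> real) \<Rightarrow> real \<Rightarrow> real \<Rightarrow> real" where
  "normalized_family k \<alpha> t =
     (if t \<le> 1 then 0 else SUP \<gamma>\<in>{\<alpha>..}. max 0 (k \<gamma> t - k \<gamma> 1))"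

locale kappa_family =
  fixes k :: "real \<Rightarrow> real \<Rightarrow> real"
  assumes nonneg: "\<And>\<gamma> t. 0 < \<gamma> \<Longrightarrow> 0 < t \<Longrightarrow> 0 \<le> k \<gamma> t"
    and mono: "\<And>\<gamma> s t. 0 < \<gamma> \<Longrightarrow> 0 < s \<Longrightarrow> s \<le> t \<Longrightarrow> k \<gamma> s \<le> k \<gamma> t"
    and convex: "\<And>\<gamma>. 0 < \<gamma> \<Longrightarrow> convex_on UNIV (\<lambda>x. k \<gamma> (exp x))"
    and antimono: "\<And>\<alpha> \<beta> t. 0 < \<alpha> \<Longrightarrow> \<alpha> \<le> \<beta> \<Longrightarrow> 0 < t \<Longrightarrow> k \<beta> t \<le> k \<alpha> t"

begin

abbreviation (input) "K \<equiv> normalized_family k"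

lemma normalized_term_le:
  assumes "0 < \<alpha>" "\<alpha> \<le> \<gamma>" "0 < t"
  shows "max 0 (k \<gamma> t - k \<gamma> 1) \<le> k \<alpha> t"
  using nonneg[of \<gamma> 1] antimono[OF assms] nonneg[of \<alpha> t] assms by simp

lemma bdd_above_normalized_terms:
  "0 < \<alpha> \<Longrightarrow> 0 < t \<Longrightarrow> bdd_above ((\<lambda>\<gamma>. max 0 (k \<gamma> t - k \<gamma> 1)) ` {\<alpha>..})"
  by (intro bdd_aboveI2[where M = "k \<alpha> t"] normalized_term_le) auto

lemma normalized_family_eq_SUP:
  assumes "0 < \<alpha>" "0 < t"
  shows "K \<alpha> t = (SUP \<gamma>\<in>{\<alpha>..}. max 0 (k \<gamma> t - k \<gamma> 1))"
proof (cases "t \<le> 1")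
  case True
  then have "max 0 (k \<gamma> t - k \<gamma> 1) = 0" if "\<gamma> \<in> {\<alpha>..}" for \<gamma>
    using that assms mono[of \<gamma> t 1] by simp
  then have "(SUP \<gamma>\<in>{\<alpha>..}. max 0 (k \<gamma> t - k \<gamma> 1)) = (SUP \<gamma>\<in>{\<alpha>..}. 0::real)"
    by (rule SUP_cong[OF refl])
  then show ?thesis
    using True by (simp add: normalized_family_def)
qed (simp add: normalized_family_def)

lemma normalized_family_eq_0: "t \<le> 1 \<Longrightarrow> K \<alpha> t = 0"
  by (simp add: normalized_family_def)

lemma normalized_family_le: "0 < \<alpha> \<Longrightarrow> 0 < t \<Longrightarrow> K \<alpha> t \<le> k \<alpha> t"
  unfolding normalized_family_eq_SUP by (intro cSUP_least normalized_term_le) auto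

lemma normalized_family_ge:
  assumes "0 < \<alpha>" "0 < t" shows "k \<alpha> t - k \<alpha> 1 \<le> K \<alpha> t"
proof -
  have "max 0 (k \<alpha> t - k \<alpha> 1) \<le> K \<alpha> t"
    unfolding normalized_family_eq_SUP[OF assms]
    by (rule cSUP_upper) (auto intro: bdd_above_normalized_terms assms)
  then show ?thesis by simp
qed

lemma normalized_family_nonneg:
  assumes "0 < \<alpha>" shows "0 \<le> K \<alpha> t"
proof (cases "t \<le> 1")
  case False
  then show ?thesis
    using normalized_family_ge[OF assms, of t] nonneg[OF assms, of 1] mono[OF assms, of 1 t] by simp
qed (simp add: normalized_family_eq_0)

lemma normalized_family_antimono:
  assumes "0 < \<alpha>" "\<alpha> \<le> \<beta>" shows "K \<beta> t \<le> K \<alpha> t"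
proof (cases "t \<le> 1")
  case False
  then have "0 < t" by simp
  with assms show ?thesis
    unfolding normalized_family_eq_SUP[OF assms(1) \<open>0 < t\<close>]
      normalized_family_eq_SUP[OF order.strict_trans2[OF assms] \<open>0 < t\<close>]
    by (intro cSUP_subset_mono bdd_above_normalized_terms) auto
qed (simp add: normalized_family_eq_0)

lemma convex_on_normalized_family_exp:
  assumes "0 < \<alpha>" shows "convex_on UNIV (\<lambda>x. K \<alpha> (exp x))"
proof -
  have "convex_on UNIV (\<lambda>x. SUP \<gamma>\<in>{\<alpha>..}. max 0 (k \<gamma> (exp x) - k \<gamma> 1))"
    using assms
    by (intro convex_on_cSUP convex_on_max convex_on_diff convex bdd_above_normalized_terms)
      (auto simp: convex_on_const concave_on_const)
  then show ?thesis
    using assms by (simp add: normalized_family_eq_SUP)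
qed

lemma mono_on_normalized_family:
  assumes "0 < \<alpha>" shows "mono_on {0..} (K \<alpha>)"
proof (rule mono_onI)
  fix s t :: real assume st: "s \<in> {0..}" "t \<in> {0..}" "s \<le> t"
  show "K \<alpha> s \<le> K \<alpha> t"
  proof (cases "s \<le> 1")
    case False
    then have "0 < s" "0 < t" using st by auto
    have "max 0 (k \<gamma> s - k \<gamma> 1) \<le> max 0 (k \<gamma> t - k \<gamma> 1)" if "\<gamma> \<in> {\<alpha>..}" for \<gamma>
      using that assms mono[of \<gamma> s t] \<open>0 < s\<close> st(3) by auto
    then show ?thesis
      unfolding normalized_family_eq_SUP[OF assms \<open>0 < s\<close>] normalized_family_eq_SUP[OF assms \<open>0 < t\<close>]
      by (intro cSUP_mono bdd_above_normalized_terms[OF assms \<open>0 < t\<close>]) auto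
  qed (simp add: normalized_family_eq_0 normalized_family_nonneg[OF assms])
qed

lemma continuous_on_normalized_family:
  assumes "0 < \<alpha>" shows "continuous_on {0..} (K \<alpha>)"
proof -
  have "continuous_on UNIV (\<lambda>x. K \<alpha> (exp x))"
    by (intro convex_on_continuous convex_on_normalized_family_exp assms) simp
  then have "continuous_on {0<..} (\<lambda>t. K \<alpha> (exp (ln t)))"
    by (rule continuous_on_compose2) (auto intro: continuous_on_ln)
  then have "continuous_on {0<..} (K \<alpha>)"
    by (rule continuous_on_cong[THEN iffD1, rotated 2]) auto
  moreover have "continuous_on {..<1} (K \<alpha>)"
    by (rule continuous_on_cong[THEN iffD1, OF refl _ continuous_on_const[of _ 0]])
      (simp add: normalized_family_eq_0)
  ultimately have "continuous_on ({0<..} \<union> {..<1}) (K \<alpha>)"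
    by (intro continuous_on_open_Un) auto
  then show ?thesis
    by (rule continuous_on_subset) auto
qed

end

section \<open>The Legendre transform and the sequences \<open>K\<close>\<close>

lemma phi_star_ge:
  assumes "bdd_above ((\<lambda>y. x * y - phi_fun \<kappa> y) ` {0..})" "0 \<le> y"
  shows "x * y - \<kappa> (exp y) \<le> phi_star \<kappa> x"
  using cSUP_upper[OF _ assms(1), of y] assms(2) by (simp add: phi_star_def phi_fun_def)

lemma phi_star_le:
  "(\<And>y. 0 \<le> y \<Longrightarrow> x * y - \<kappa> (exp y) \<le> C) \<Longrightarrow> phi_star \<kappa> x \<le> C"
  unfolding phi_star_def phi_fun_def by (rule cSUP_least) auto

lemma bdd_above_phi_terms:
  "(\<And>y. 0 \<le> y \<Longrightarrow> x * y - \<kappa> (exp y) \<le> C) \<Longrightarrow> bdd_above ((\<lambda>y. x * y - phi_fun \<kappa> y) ` {0..})"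
  unfolding phi_fun_def by (rule bdd_aboveI2[where M = C]) simp

lemma Kseq_pos: "0 < Kseq \<kappa> j"
  by (simp add: Kseq_def)

lemma Kseq_le: "(\<And>y. 0 \<le> y \<Longrightarrow> j * y - \<kappa> (exp y) \<le> C) \<Longrightarrow> Kseq \<kappa> j \<le> exp C"
  unfolding Kseq_def by (simp add: phi_star_le)

lemma Kseq_ge:
  assumes "bdd_above ((\<lambda>y. real j * y - phi_fun \<kappa> y) ` {0..})" "1 \<le> u"
  shows "exp (j * ln u - \<kappa> u) \<le> Kseq \<kappa> j"
  using phi_star_ge[OF assms(1), of "ln u"] assms(2) by (simp add: Kseq_def)

lemma Kseq_0:
  assumes "\<And>t. 1 \<le> t \<Longrightarrow> 0 \<le> \<kappa> t" "\<kappa> 1 = 0"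
  shows "Kseq \<kappa> 0 = 1"
proof -
  have "phi_star \<kappa> 0 = 0"
  proof (rule antisym)
    show "phi_star \<kappa> 0 \<le> 0"
      using assms(1) by (intro phi_star_le) simp
    show "0 \<le> phi_star \<kappa> 0"
      using phi_star_ge[OF bdd_above_phi_terms, of 0 \<kappa> 0 0] assms by auto
  qed
  then show ?thesis by (simp add: Kseq_def)
qed

lemma Kseq_1_ge:
  assumes "\<And>j. bdd_above ((\<lambda>y. real j * y - phi_fun \<kappa> y) ` {0..})" "\<kappa> 1 = 0"
  shows "1 \<le> Kseq \<kappa> 1"
  using Kseq_ge[OF assms(1), of 1 1] assms(2) by simp

lemma Kseq_log_convex:
  assumes "\<And>j. bdd_above ((\<lambda>y. real j * y - phi_fun \<kappa> y) ` {0..})"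
  shows "Kseq \<kappa> (j + 1) * Kseq \<kappa> (j + 1) \<le> Kseq \<kappa> j * Kseq \<kappa> (j + 2)"
proof -
  have "2 * phi_star \<kappa> (j + 1) \<le> phi_star \<kappa> j + phi_star \<kappa> (j + 2)"
  proof -
    have "real (j + 1) * y - \<kappa> (exp y) \<le> (phi_star \<kappa> j + phi_star \<kappa> (j + 2)) / 2" if "0 \<le> y" for y
      using phi_star_ge[OF assms that, of j] phi_star_ge[OF assms that, of "j + 2"]
      by (simp add: algebra_simps)
    then show ?thesis
      using phi_star_le[of "real (j + 1)" \<kappa>] by fastforce
  qed
  then show ?thesis
    by (simp add: Kseq_def flip: exp_add)
qed

lemma Kseq_antimono:
  assumes "bdd_above ((\<lambda>y. real j * y - phi_fun \<kappa> y) ` {0..})" "\<And>t. 1 \<le> t \<Longrightarrow> \<kappa> t \<le> \<kappa>' t"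
  shows "Kseq \<kappa>' j \<le> Kseq \<kappa> j"
proof -
  have "real j * y - \<kappa>' (exp y) \<le> phi_star \<kappa> j" if "0 \<le> y" for y
    using phi_star_ge[OF assms(1) that] assms(2)[of "exp y"] that by simp
  then have "phi_star \<kappa>' j \<le> phi_star \<kappa> j"
    by (rule phi_star_le)
  then show ?thesis by (simp add: Kseq_def)
qed

lemma Kseq_ge_power:
  assumes "bdd_above ((\<lambda>y. real j * y - phi_fun \<kappa> y) ` {0..})" "1 \<le> u" "\<kappa> u \<le> j"
  shows "(u / exp 1) ^ j \<le> Kseq \<kappa> j"
proof -
  have "(u / exp 1) ^ j = exp (j * ln u - j)"
    using assms(2) exp_of_nat_mult[of j "1::real"] by (simp add: exp_diff exp_of_nat_mult power_divide)
  also have "\<dots> \<le> exp (j * ln u - \<kappa> u)"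
    using assms(3) by simp
  also have "\<dots> \<le> Kseq \<kappa> j"
    by (rule Kseq_ge[OF assms(1,2)])
  finally show ?thesis .
qed

text \<open>Choosing \<open>u = e Z j\<close> in the Legendre transform gives \<open>K\<^sub>j \<ge> (Z j)\<^sup>j \<ge> Z\<^sup>j j!\<close>
  as soon as \<open>\<kappa>(e Z j) \<le> j\<close>, which holds for large \<open>j\<close> because \<open>\<kappa>(t) = o(t)\<close>.\<close>
lemma root_Kseq_div_fact_tendsto:
  assumes bdd: "\<And>j. bdd_above ((\<lambda>y. real j * y - phi_fun \<kappa> y) ` {0..})"
    and sublinear: "((\<lambda>t. \<kappa> t / t) \<longlongrightarrow> 0) at_top"
  shows "filterlim (\<lambda>j. root j (Kseq \<kappa> j / fact j)) at_top sequentially"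
  unfolding filterlim_at_top_ge[where c = 1]
proof (intro allI impI)
  fix Z :: real assume Z: "1 \<le> Z"
  define B where "B = exp 1 * Z"
  have B: "1 \<le> B"
    using Z order.trans[of 1 Z "exp 1 * Z"] by (simp add: B_def mult_le_cancel_right1)
  have "eventually (\<lambda>t. \<kappa> t / t < 1 / B) at_top"
    using B by (intro order_tendstoD(2)[OF sublinear]) simp
  then obtain U where U: "\<And>t. U \<le> t \<Longrightarrow> \<kappa> t / t < 1 / B"
    by (auto simp: eventually_at_top_linorder)
  show "eventually (\<lambda>j. Z \<le> root j (Kseq \<kappa> j / fact j)) sequentially"
  proof (rule eventually_sequentiallyI[of "max 1 (nat \<lceil>U\<rceil>)"])
    fix j :: nat assume j: "max 1 (nat \<lceil>U\<rceil>) \<le> j"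
    moreover have "real j \<le> B * j"
      using B by (simp add: mult_le_cancel_right1)
    ultimately have "1 \<le> j" "1 \<le> B * j" "U \<le> B * j"
      by linarith+
    then have "\<kappa> (B * j) \<le> j"
      using U[of "B * j"] B by (simp add: field_simps)
    have "Z ^ j * fact j \<le> Z ^ j * real j ^ j"
      using Z fact_le_power[of j, where 'a = real] by (intro mult_left_mono) simp_all
    also have "\<dots> = (B * j / exp 1) ^ j"
      by (simp add: B_def power_mult_distrib)
    also have "\<dots> \<le> Kseq \<kappa> j"
      by (rule Kseq_ge_power[OF bdd \<open>1 \<le> B * j\<close> \<open>\<kappa> (B * j) \<le> j\<close>])
    finally have "Z ^ j \<le> Kseq \<kappa> j / fact j"
      by (simp add: field_simps)
    then have "root j (Z ^ j) \<le> root j (Kseq \<kappa> j / fact j)"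
      using \<open>1 \<le> j\<close> by simp
    then show "Z \<le> root j (Kseq \<kappa> j / fact j)"
      using \<open>1 \<le> j\<close> Z by (simp add: real_root_power_cancel)
  qed
qed

section \<open>Weight matrices\<close>

lemma nq_weight_matrixD:
  assumes "nq_weight_matrix Mf" "0 < \<alpha>"
  obtains \<mu> where "wseq_rep (Mf \<alpha>) \<mu>" "nq_weight_seq (Mf \<alpha>)"
  using assms unfolding nq_weight_matrix_def nq_weight_seq_def by blast

lemma kappa_family_of_nq_weight_matrix:
  assumes "nq_weight_matrix Mf"
  shows "kappa_family (\<lambda>\<gamma>. kappa (assoc_tilde (Mf \<gamma>)))"
proof
  fix \<gamma> s t :: real assume "0 < \<gamma>"
  then obtain \<mu> where \<mu>: "wseq_rep (Mf \<gamma>) \<mu>" and nq: "nonquasianalytic (assoc_tilde (Mf \<gamma>))"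
    using assms nonquasianalytic_assoc_tilde by (metis nq_weight_matrixD)
  show "0 < t \<Longrightarrow> 0 \<le> kappa (assoc_tilde (Mf \<gamma>)) t"
    by (rule nonquasianalytic.kappa_nonneg[OF nq])
  show "0 < s \<Longrightarrow> s \<le> t \<Longrightarrow> kappa (assoc_tilde (Mf \<gamma>)) s \<le> kappa (assoc_tilde (Mf \<gamma>)) t"
    by (rule nonquasianalytic.kappa_mono[OF nq])
  show "convex_on UNIV (\<lambda>x. kappa (assoc_tilde (Mf \<gamma>)) (exp x))"
    by (rule nonquasianalytic.convex_on_kappa_exp[OF nq convex_on_assoc_tilde_exp[OF \<mu>]])
next
  fix \<alpha> \<beta> t :: real assume "0 < \<alpha>" "\<alpha> \<le> \<beta>" "0 < t"
  moreover obtain \<mu> \<nu> where "wseq_rep (Mf \<alpha>) \<mu>" "wseq_rep (Mf \<beta>) \<nu>"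
    "nq_weight_seq (Mf \<alpha>)" "nq_weight_seq (Mf \<beta>)"
    using assms \<open>0 < \<alpha>\<close> \<open>\<alpha> \<le> \<beta>\<close> by (metis nq_weight_matrixD order.strict_trans2)
  moreover have "Mf \<alpha> k \<le> Mf \<beta> k" for k
    using assms \<open>0 < \<alpha>\<close> \<open>\<alpha> \<le> \<beta>\<close> by (simp add: nq_weight_matrix_def weight_matrix_def)
  ultimately show "kappa (assoc_tilde (Mf \<beta>)) t \<le> kappa (assoc_tilde (Mf \<alpha>)) t"
    by (intro nonquasianalytic.kappa_le_kappa nonquasianalytic_assoc_tilde assoc_tilde_antimono) auto
qed

context
  fixes Mf :: "real \<Rightarrow> nat \<Rightarrow> real"
  assumes nq: "nq_weight_matrix Mf"

begin

interpretation kappa_family "\<lambda>\<gamma>. kappa (assoc_tilde (Mf \<gamma>))"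
  by (rule kappa_family_of_nq_weight_matrix[OF nq])

abbreviation (input) "\<kappa> \<gamma> \<equiv> kappa (assoc_tilde (Mf \<gamma>))"

lemma normalized_family_ge_log:
  assumes "0 < \<alpha>" "0 < t"
  shows "j * ln t - ln (Mf \<alpha> j) - \<kappa> \<alpha> 1 \<le> K \<alpha> t"
proof -
  obtain \<mu> where \<mu>: "wseq_rep (Mf \<alpha>) \<mu>" and "nq_weight_seq (Mf \<alpha>)"
    using nq_weight_matrixD[OF nq assms(1)] .
  have "j * ln t - ln (Mf \<alpha> j) \<le> assoc_tilde (Mf \<alpha>) t"
    by (rule assoc_tilde_ge[OF \<mu> assms(2)])
  also have "\<dots> \<le> \<kappa> \<alpha> t"
    by (rule nonquasianalytic.le_kappa[OF nonquasianalytic_assoc_tilde assms(2)]) fact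
  finally show ?thesis
    using normalized_family_ge[OF assms] by simp
qed

lemma bdd_above_phi_normalized_family:
  "0 < \<alpha> \<Longrightarrow> bdd_above ((\<lambda>y. real j * y - phi_fun (K \<alpha>) y) ` {0..})"
  using normalized_family_ge_log[of \<alpha> "exp _" j]
  by (intro bdd_above_phi_terms[where C = "ln (Mf \<alpha> j) + \<kappa> \<alpha> 1"]) (simp add: algebra_simps)

lemma normalized_equiv_normalized_family:
  assumes "0 < \<alpha>" shows "normalized_equiv (\<kappa> \<alpha>) (K \<alpha>)"
proof -
  have ln_o: "(\<lambda>t. ln t) \<in> o[at_top](K \<alpha>)"
  proof (rule ln_smallo_of_lower_bounds)
    fix j :: nat
    show "\<exists>C. \<forall>t>0. j * ln t - C \<le> K \<alpha> t"
      using normalized_family_ge_log[OF assms, of _ j]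
      by (intro exI[of _ "ln (Mf \<alpha> j) + \<kappa> \<alpha> 1"]) (simp add: algebra_simps)
  qed
  have "filterlim (\<lambda>t. (- ln (Mf \<alpha> 1) - \<kappa> \<alpha> 1) + ln t) at_top at_top"
    by (rule filterlim_tendsto_add_at_top[OF tendsto_const ln_at_top])
  moreover have "eventually (\<lambda>t. (- ln (Mf \<alpha> 1) - \<kappa> \<alpha> 1) + ln t \<le> K \<alpha> t) at_top"
    using eventually_gt_at_top[of 0] by (rule eventually_mono)
      (use normalized_family_ge_log[OF assms, of _ 1] in fastforce)
  ultimately have "filterlim (K \<alpha>) at_top at_top"
    by (rule filterlim_at_top_mono)
  moreover have "eventually (\<lambda>t. \<bar>\<kappa> \<alpha> t - K \<alpha> t\<bar> \<le> \<kappa> \<alpha> 1) at_top"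
    using eventually_gt_at_top[of 0] by (rule eventually_mono)
      (use normalized_family_le[OF assms] normalized_family_ge[OF assms] in fastforce)
  ultimately have "\<kappa> \<alpha> \<in> O[at_top](K \<alpha>)" "K \<alpha> \<in> O[at_top](\<kappa> \<alpha>)"
    by (rule bigo_of_bounded_difference)+
  then show ?thesis
    using assms ln_o continuous_on_normalized_family mono_on_normalized_family
      convex_on_normalized_family_exp
    by (auto simp: normalized_equiv_def pre_weight_fun_def normalized_family_eq_0)
qed

lemma Kseq_normalized_family_0: "0 < \<alpha> \<Longrightarrow> Kseq (K \<alpha>) 0 = 1"
  by (intro Kseq_0 normalized_family_nonneg normalized_family_eq_0) simp_all

lemma Kseq_normalized_family_1: "0 < \<alpha> \<Longrightarrow> 1 \<le> Kseq (K \<alpha>) 1"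
  by (intro Kseq_1_ge bdd_above_phi_normalized_family normalized_family_eq_0) simp_all

lemma Kseq_normalized_family_mono:
  "0 < \<alpha> \<Longrightarrow> \<alpha> \<le> \<beta> \<Longrightarrow> Kseq (K \<alpha>) j \<le> Kseq (K \<beta>) j"
  by (intro Kseq_antimono bdd_above_phi_normalized_family normalized_family_antimono) auto

lemma Kseq_normalized_family_div_le:
  assumes "0 < \<alpha>" shows "Kseq (K \<alpha>) j / Mf \<alpha> j \<le> exp (\<kappa> \<alpha> 1)"
proof -
  obtain \<mu> where "wseq_rep (Mf \<alpha>) \<mu>"
    using nq_weight_matrixD[OF nq assms] .
  then have "0 < Mf \<alpha> j"
    using wseq_rep_ge_one less_le_trans zero_less_one by blast
  have "Kseq (K \<alpha>) j \<le> exp (ln (Mf \<alpha> j) + \<kappa> \<alpha> 1)"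
    using normalized_family_ge_log[OF assms exp_gt_zero, of j]
    by (intro Kseq_le) (simp add: algebra_simps)
  then show ?thesis
    using \<open>0 < Mf \<alpha> j\<close> by (simp add: exp_add divide_le_eq mult.commute)
qed

lemma root_Kseq_normalized_family_tendsto:
  assumes "0 < \<alpha>"
  shows "filterlim (\<lambda>j. root j (Kseq (K \<alpha>) j / fact j)) at_top sequentially"
proof (intro root_Kseq_div_fact_tendsto bdd_above_phi_normalized_family assms)
  have "nq_weight_seq (Mf \<alpha>)"
    using nq assms by (simp add: nq_weight_matrix_def)
  then have lim: "((\<lambda>t. \<kappa> \<alpha> t / t) \<longlongrightarrow> 0) at_top"
    by (intro nonquasianalytic.kappa_div_tendsto_zero nonquasianalytic_assoc_tilde)
  have lower: "eventually (\<lambda>t. 0 \<le> K \<alpha> t / t) at_top"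
    using eventually_gt_at_top[of 0] by (rule eventually_mono)
      (use normalized_family_nonneg[OF assms] in simp)
  have upper: "eventually (\<lambda>t. K \<alpha> t / t \<le> \<kappa> \<alpha> t / t) at_top"
    using eventually_gt_at_top[of 0] by (rule eventually_mono)
      (use normalized_family_le[OF assms] in \<open>simp add: divide_right_mono\<close>)
  show "((\<lambda>t. K \<alpha> t / t) \<longlongrightarrow> 0) at_top"
    by (rule tendsto_sandwich[OF lower upper tendsto_const lim])
qed

lemma weight_seq_Kseq_normalized_family:
  assumes "0 < \<alpha>" shows "weight_seq (Kseq (K \<alpha>))"
proof (rule weight_seq_of_log_convex)
  have "root j (Kseq (K \<alpha>) j / fact j) \<le> root j (Kseq (K \<alpha>) j)" if "1 \<le> j" for j
    using that Kseq_pos[of "K \<alpha>" j] fact_ge_1[of j, where 'a = real]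
    by (simp add: divide_le_eq mult_le_cancel_left1)
  then show "filterlim (\<lambda>j. root j (Kseq (K \<alpha>) j)) at_top sequentially"
    by (intro filterlim_at_top_mono[OF root_Kseq_normalized_family_tendsto[OF assms]]
        eventually_sequentiallyI)
  show "Kseq (K \<alpha>) (j + 1) * Kseq (K \<alpha>) (j + 1) \<le> Kseq (K \<alpha>) j * Kseq (K \<alpha>) (j + 2)" for j
    by (intro Kseq_log_convex bdd_above_phi_normalized_family assms)
  show "1 \<le> Kseq (K \<alpha>) 1"
    by (rule Kseq_normalized_family_1[OF assms])
qed (simp_all add: Kseq_pos Kseq_normalized_family_0 assms)

end

theorem lemma3p2:
  fixes Mf :: "real \<Rightarrow> nat \<Rightarrow> real"
  assumes "nq_weight_matrix Mf"
  shows "\<exists>\<kappa>' :: real \<Rightarrow> real \<Rightarrow> real.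
     (\<forall>\<alpha>>0. normalized_equiv (kappa (assoc_tilde (Mf \<alpha>))) (\<kappa>' \<alpha>)
              \<and> Kseq (\<kappa>' \<alpha>) 0 = 1 \<and> 1 \<le> Kseq (\<kappa>' \<alpha>) 1)
   \<and> weight_matrix (\<lambda>\<alpha>. Kseq (\<kappa>' \<alpha>))
   \<and> (\<forall>\<alpha>>0. filterlim (\<lambda>j. root j (Kseq (\<kappa>' \<alpha>) j / fact j)) at_top sequentially
              \<and> (\<exists>C. \<forall>j. Kseq (\<kappa>' \<alpha>) j / Mf \<alpha> j \<le> C))"
proof -
  let ?K = "normalized_family (\<lambda>\<gamma>. kappa (assoc_tilde (Mf \<gamma>)))"
  have "normalized_equiv (kappa (assoc_tilde (Mf \<alpha>))) (?K \<alpha>)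
      \<and> Kseq (?K \<alpha>) 0 = 1 \<and> 1 \<le> Kseq (?K \<alpha>) 1" if "0 < \<alpha>" for \<alpha>
    by (intro conjI normalized_equiv_normalized_family Kseq_normalized_family_0
        Kseq_normalized_family_1 assms that)
  moreover have "weight_matrix (\<lambda>\<alpha>. Kseq (?K \<alpha>))"
    unfolding weight_matrix_def
    using weight_seq_Kseq_normalized_family[OF assms] Kseq_normalized_family_mono[OF assms] by blast
  moreover have "filterlim (\<lambda>j. root j (Kseq (?K \<alpha>) j / fact j)) at_top sequentially
      \<and> (\<exists>C. \<forall>j. Kseq (?K \<alpha>) j / Mf \<alpha> j \<le> C)" if "0 < \<alpha>" for \<alpha>
    using Kseq_normalized_family_div_le[OF assms that]
    by (intro conjI root_Kseq_normalized_family_tendsto[OF assms that]) blast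
  ultimately show ?thesis
    by (intro exI[of _ ?K]) blast
qed

end
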